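(* For all words $a,b,u,v\in\{m_1,\dots,m_{k+1}\}^*$, we have $aub\sim avb$ if and only if $u\sim v$.
   Context: Fix $k\ge 0$. A system of $k$ stacks in series consists of an input queue, stacks $1,\dots,k$, and an output queue. A state records the contents of each stack and each queue (finitely many distinct labelled elements); there is one additional "illegal" state $\varnothing$; $\mathcal S_k$ denotes the set of all states including $\varnothing$. The moves are $m_1,\dots,m_{k+1}$: $m_i$ ($1\le i\le k$) pushes an element onto stack $i$, taking it from the front of the input queue if $i=1$ and popping it from the top of stack $i-1$ if $i>1$; $m_{k+1}$ pops the top of stack $k$ and enqueues it at the back of the output queue. For a word $w$ and state $s$, $w\ast s$ is obtained by applying the moves of $w$ left to right, with $w\ast s=\varnothing$ if some move is illegal and $w\ast\varnothing=\varnothing$. For words $x,y$ define $x\sim y$ iff $x\ast s=y\ast s$ for all $s\in\mathcal S_k$. *)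

theory Defs
  imports Main
begin

text \<open>A legal state of k stacks in series: (input queue, stacks 1..k, output queue).
  The input queue is a list whose head is its front; stack j (1-based) is the list
  at index j-1, whose head is its top; the output queue is a list whose last element
  is its back.
  The illegal state is None.\<close>

type_synonym sstate = "(nat list \<times> nat list list \<times> nat list) option"

definition states :: "nat \<Rightarrow> sstate set" where
  "states k = {None} \<union>
     {Some (inp, ss, out) | inp ss out. length ss = k \<and> distinct (inp @ concat ss @ out)}"

text \<open>Move m_i: take an element from the input queue (i = 1) or pop it from stack i-1
  (i > 1), then push it onto stack i (i \<le> k) or enqueue it on the output queue (i = k+1).\<close>

fun move :: "nat \<Rightarrow> nat \<Rightarrow> sstate \<Rightarrow> sstate" where
  "move k i None = None"
| "move k i (Some (inp, ss, out)) =
     (if i < 1 \<or> k + 1 < i then None else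
      (let src = (if i = 1 then (case inp of [] \<Rightarrow> None | x # r \<Rightarrow> Some (x, r, ss, out))
                  else (case ss ! (i - 2) of [] \<Rightarrow> None
                        | x # r \<Rightarrow> Some (x, inp, ss[i - 2 := r], out)))
       in case src of None \<Rightarrow> None
          | Some (x, inp', ss', out') \<Rightarrow>
              (if i = k + 1 then Some (inp', ss', out' @ [x])
               else Some (inp', ss'[i - 1 := x # ss' ! (i - 1)], out'))))"

fun act :: "nat \<Rightarrow> nat list \<Rightarrow> sstate \<Rightarrow> sstate" where
  "act k [] s = s"
| "act k (m # w) s = act k w (move k m s)"

definition equiv_words :: "nat \<Rightarrow> nat list \<Rightarrow> nat list \<Rightarrow> bool" where
  "equiv_words k x y \<longleftrightarrow> (\<forall>s \<in> states k. act k x s = act k y s)"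

end

theory Submission imports Defs "HOL-Library.Multiset" begin

(* A legal state is recoded as a list of n = k + 2 columns: the input
   queue, the k stacks, and the reversed output queue, each read from its "top".
   Move i then simply pops the top of column i-1 and pushes it onto column i, so all
   moves are instances of one uniform step, and words act as partial injections.
   The direction u ~ v ==> aub ~ avb holds because ~ is a congruence.  For the
   converse, take a state L with u L <> v L and append fresh elements at the bottom
   of every column.  If the padding is deep enough, (1) u and v still produce
   different states (if u failed on L, it now digs a padding element out of a column
   that v leaves in place, and elements never move left again); (2) every short word
   succeeds, in particular b after u and after v, and b is injective; (3) every state
   of depth >= |a| has a preimage under a.  Hence aub and avb differ on that preimage. *)

section \<open>Columns and the uniform step\<close>

definition stepL :: "nat \<Rightarrow> nat list list \<Rightarrow> nat list list option" where
  "stepL i L = (if i < 1 \<or> length L \<le> i then None else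
     (case L!(i-1) of [] \<Rightarrow> None | x#r \<Rightarrow> Some (L[i-1 := r, i := x # (L!i)])))"

fun runL :: "nat list \<Rightarrow> nat list list \<Rightarrow> nat list list option" where
  "runL [] L = Some L"
| "runL (i#w) L = (case stepL i L of None \<Rightarrow> None | Some M \<Rightarrow> runL w M)"

definition validL :: "nat \<Rightarrow> nat list list \<Rightarrow> bool" where
  "validL n L \<longleftrightarrow> length L = n \<and> distinct (concat L)"

lemma stepL_SomeE:
  assumes "stepL i L = Some M"
  obtains x r where "1 \<le> i" "i < length L" "L!(i-1) = x#r" "M = L[i-1 := r, i := x # (L!i)]"
  using assms unfolding stepL_def by (auto split: if_splits list.splits)

lemma run_append: "runL (x @ y) L = (case runL x L of None \<Rightarrow> None | Some M \<Rightarrow> runL y M)"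
  by (induction x arbitrary: L) (auto split: option.splits)

lemma step_length: "stepL i L = Some M \<Longrightarrow> length M = length L"
  by (erule stepL_SomeE) auto

lemma run_length: "runL w L = Some M \<Longrightarrow> length M = length L"
  by (induction w arbitrary: L) (auto split: option.splits dest: step_length)

lemma mset_concat_update:
  "j < length xs \<Longrightarrow> mset (concat (xs[j:=y])) + mset (xs!j) = mset (concat xs) + mset y"
  by (induction xs arbitrary: j) (auto split: nat.splits simp: ac_simps)

lemma step_mset: "stepL i L = Some M \<Longrightarrow> mset (concat M) = mset (concat L)"
proof (erule stepL_SomeE)
  fix x r assume h: "1 \<le> i" "i < length L" "L!(i-1) = x#r" "M = L[i-1 := r, i := x # (L!i)]"
  have pop: "mset (concat (L[i-1:=r])) + mset (x#r) = mset (concat L) + mset r"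
    using mset_concat_update[of "i-1" L r] h by simp
  have push: "mset (concat M) + mset (L!i) = mset (concat (L[i-1:=r])) + mset (x # L!i)"
    using mset_concat_update[of i "L[i-1:=r]" "x # L!i"] h by simp
  from pop push show ?thesis by (simp add: ac_simps)
qed

lemma run_mset: "runL w L = Some M \<Longrightarrow> mset (concat M) = mset (concat L)"
  by (induction w arbitrary: L) (auto split: option.splits dest: step_mset)

lemma run_valid_iff: "runL w L = Some M \<Longrightarrow> validL n M \<longleftrightarrow> validL n L"
  unfolding validL_def using run_length[of w L M] run_mset[of w L M]
    mset_eq_imp_distinct_iff[of "concat M" "concat L"] by simp

lemma run_first_fail:
  "runL w L = None \<Longrightarrow> \<exists>w1 i w2 X. w = w1 @ i # w2 \<and> runL w1 L = Some X \<and> stepL i X = None"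
proof (induction w arbitrary: L)
  case (Cons i w)
  show ?case
  proof (cases "stepL i L")
    case None then show ?thesis by (intro exI[of _ "[]"]) auto
  next
    case (Some M)
    then have "runL w M = None" using Cons.prems by simp
    then obtain w1 j w2 X where "w = w1 @ j # w2" "runL w1 M = Some X" "stepL j X = None"
      using Cons.IH by blast
    then show ?thesis using Some by (intro exI[of _ "i#w1"]) auto
  qed
qed simp

text \<open>A step can be undone: the moved element is the top of column i.\<close>

lemma step_inv: "stepL i L = Some M \<Longrightarrow> L = M[i := tl (M!i), i-1 := hd (M!i) # (M!(i-1))]"
proof (erule stepL_SomeE)
  fix x r assume h: "1 \<le> i" "i < length L" "L!(i-1) = x#r" "M = L[i-1 := r, i := x # (L!i)]"
  show ?thesis
    by (rule nth_equalityI) (use h in \<open>auto simp: nth_list_update\<close>)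
qed

lemma run_inj: "runL w L1 = Some M \<Longrightarrow> runL w L2 = Some M \<Longrightarrow> L1 = L2"
proof (induction w arbitrary: L1 L2)
  case (Cons i w)
  then show ?case by (auto split: option.splits dest: step_inv)
qed simp

section \<open>Padding the bottoms of the columns\<close>

definition padL :: "nat list list \<Rightarrow> nat list list \<Rightarrow> nat list list" where
  "padL P L = map (\<lambda>(x,y). x @ y) (zip L P)"

lemma padL_length[simp]: "length P = length L \<Longrightarrow> length (padL P L) = length L"
  by (simp add: padL_def)

lemma padL_nth[simp]: "length P = length L \<Longrightarrow> j < length L \<Longrightarrow> padL P L ! j = L!j @ P!j"
  by (simp add: padL_def)

lemma pad_inj: "length P = length L \<Longrightarrow> length L' = length L \<Longrightarrow> padL P L = padL P L' \<Longrightarrow> L = L'"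
proof (rule nth_equalityI)
  fix j assume "length P = length L" "length L' = length L" "padL P L = padL P L'" "j < length L"
  then show "L!j = L'!j" by (metis append_same_eq padL_nth)
qed simp

lemma mset_pad: "length P = length L \<Longrightarrow> mset (concat (padL P L)) = mset (concat L) + mset (concat P)"
  by (induction L arbitrary: P) (auto simp: padL_def length_Suc_conv ac_simps)

lemma pad_valid: "validL n L \<Longrightarrow> length P = n \<Longrightarrow> distinct (concat L @ concat P) \<Longrightarrow> validL n (padL P L)"
  unfolding validL_def using mset_pad[of P L]
    mset_eq_imp_distinct_iff[of "concat (padL P L)" "concat L @ concat P"] by simp

lemma step_pad: "length P = length L \<Longrightarrow> stepL i L = Some M \<Longrightarrow> stepL i (padL P L) = Some (padL P M)"
proof (erule stepL_SomeE)
  fix x r assume P: "length P = length L"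
    and h: "1 \<le> i" "i < length L" "L!(i-1) = x#r" "M = L[i-1 := r, i := x # (L!i)]"
  have "(padL P L)[i-1 := r @ P!(i-1), i := x # ((padL P L)!i)] = padL P M"
    by (rule nth_equalityI) (use h P in \<open>auto simp: nth_list_update\<close>)
  then show ?thesis using h P by (simp add: stepL_def)
qed

lemma run_pad: "length P = length L \<Longrightarrow> runL w L = Some M \<Longrightarrow> runL w (padL P L) = Some (padL P M)"
proof (induction w arbitrary: L)
  case (Cons i w)
  then obtain M1 where M1: "stepL i L = Some M1" "runL w M1 = Some M" by (auto split: option.splits)
  have "length P = length M1" using Cons.prems step_length[OF M1(1)] by simp
  then show ?case using Cons.IH M1 step_pad[OF Cons.prems(1) M1(1)] by simp
qed simp

text \<open>Fresh padding of any shape exists: use numbers above all elements already present.\<close>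

lemma fresh_pad:
  fixes xs :: "nat list"
  assumes "distinct xs"
  shows "\<exists>P. length P = m \<and> (\<forall>j<m. length (P!j) = N) \<and> distinct (xs @ concat P)"
proof -
  define B where "B = Suc (Max (insert 0 (set xs)))"
  define P where "P = map (\<lambda>j. [B + j*N..<B + j*N + N]) [0..<m]"
  have blocks: "concat (map (\<lambda>j. [B + j*N..<B + j*N + N]) [0..<m']) = [B..<B + m'*N]" for m'
  proof (induction m')
    case (Suc m')
    have "concat (map (\<lambda>j. [B + j*N..<B + j*N + N]) [0..<Suc m']) = [B..<B + m'*N] @ [B + m'*N..<B + m'*N + N]"
      using Suc.IH by simp
    also have "\<dots> = [B..<B + m'*N + N]" using upt_add_eq_append[of B "B + m'*N" N] by simp
    also have "B + m'*N + N = B + Suc m' * N" by simp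
    finally show ?case .
  qed simp
  have "\<forall>x\<in>set xs. x < B" unfolding B_def by (simp add: le_imp_less_Suc)
  then have "distinct (xs @ concat P)" using assms by (auto simp: P_def blocks)
  then show ?thesis by (intro exI[of _ P]) (simp add: P_def)
qed

section \<open>Depth: short words always succeed and always have preimages\<close>

definition deep :: "nat \<Rightarrow> nat list list \<Rightarrow> bool" where
  "deep d L \<longleftrightarrow> (\<forall>j<length L. d \<le> length (L!j))"

lemma deep_mono: "deep d L \<Longrightarrow> d' \<le> d \<Longrightarrow> deep d' L"
  by (auto simp: deep_def)

lemma pad_deep: "length P = length L \<Longrightarrow> \<forall>j<length L. length (P!j) = d \<Longrightarrow> deep d (padL P L)"
  by (simp add: deep_def)

lemma step_deep:
  assumes "deep (Suc d) L" "1 \<le> i" "i < length L"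
  shows "\<exists>M. stepL i L = Some M \<and> deep d M"
proof -
  obtain x r where xr: "L!(i-1) = x#r" using assms unfolding deep_def
    by (metis Suc_le_length_iff le_less_trans less_imp_diff_less)
  let ?M = "L[i-1 := r, i := x # (L!i)]"
  have "stepL i L = Some ?M" using assms xr by (simp add: stepL_def)
  moreover have "deep d ?M" using assms xr by (auto simp: deep_def nth_list_update)
  ultimately show ?thesis by blast
qed

text \<open>Each move lowers the depth by at most one.\<close>

lemma run_deep:
  "deep d L \<Longrightarrow> length w \<le> d \<Longrightarrow> set w \<subseteq> {1..<length L}
   \<Longrightarrow> \<exists>M. runL w L = Some M \<and> deep (d - length w) M"
proof (induction w arbitrary: L d)
  case (Cons i w)
  then obtain d' where d: "d = Suc d'" by (cases d) auto
  from Cons.prems d obtain M where M: "stepL i L = Some M" "deep d' M"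
    using step_deep[of d' L i] by auto
  then show ?case using Cons.IH[OF M(2)] Cons.prems d step_length[OF M(1)] by auto
qed simp

lemma step_undo:
  assumes "deep (Suc d) L" "1 \<le> i" "i < length L"
  shows "\<exists>L0. stepL i L0 = Some L \<and> deep d L0"
proof -
  obtain x r where xr: "L!i = x#r" using assms unfolding deep_def by (metis Suc_le_length_iff)
  let ?L0 = "L[i := r, i-1 := x # (L!(i-1))]"
  have "?L0 [i-1 := L!(i-1), i := x # (?L0!i)] = L"
    by (rule nth_equalityI) (use assms xr in \<open>auto simp: nth_list_update\<close>)
  then have "stepL i ?L0 = Some L" using assms by (simp add: stepL_def)
  moreover have "deep d ?L0" using assms xr by (auto simp: deep_def nth_list_update)
  ultimately show ?thesis by blast
qed

lemma run_undo:
  "deep d L \<Longrightarrow> length a \<le> d \<Longrightarrow> set a \<subseteq> {1..<length L} \<Longrightarrow> \<exists>L0. runL a L0 = Some L"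
proof (induction a arbitrary: L d rule: rev_induct)
  case (snoc i a)
  then obtain d' where d: "d = Suc d'" by (cases d) auto
  from snoc.prems d obtain L1 where L1: "stepL i L1 = Some L" "deep d' L1"
    using step_undo[of d' L i] by auto
  obtain L0 where "runL a L0 = Some L1"
    using snoc.IH[OF L1(2)] snoc.prems d step_length[OF L1(1)] by auto
  then have "runL (a @ [i]) L0 = Some L" using L1 by (simp add: run_append)
  then show ?case by blast
qed simp

section \<open>Elements only move to the right\<close>

definition low_mset :: "nat \<Rightarrow> nat list list \<Rightarrow> nat multiset" where
  "low_mset l L = mset (concat (take l L))"

lemma low_mset_sub: "low_mset l L \<subseteq># mset (concat L)"
  unfolding low_mset_def by (metis append_take_drop_id concat_append mset_append mset_subset_eq_add_left)

lemma step_low_mset: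
  assumes "stepL i L = Some M"
  shows "low_mset l M \<subseteq># low_mset l L \<and> (l = i \<longrightarrow> low_mset l L = low_mset l M + {# hd (L!(i-1)) #})"
proof (rule stepL_SomeE[OF assms])
  fix x r assume h: "1 \<le> i" "i < length L" "L!(i-1) = x#r" "M = L[i-1 := r, i := x # (L!i)]"
  have tM: "take l M = (take l L)[i-1 := r, i := x # (L!i)]" using h by (simp add: take_update_swap)
  show ?thesis
  proof (cases "l \<le> i - 1")
    case True
    then show ?thesis using h unfolding low_mset_def by (simp add: tM list_update_beyond)
  next
    case False
    then have l1: "i - 1 < length (take l L)" using h by simp
    have pop: "mset (concat ((take l L)[i-1:=r])) + mset (x#r) = mset (concat (take l L)) + mset r"
      using mset_concat_update[OF l1, of r] h l1 by simp
    show ?thesis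
    proof (cases "l = i")
      case True
      then have "take l M = (take l L)[i-1 := r]" using tM by (simp add: list_update_beyond)
      then show ?thesis using pop True h unfolding low_mset_def
        by (simp add: ac_simps) (metis add_mset_add_single mset_subset_eq_add_left)
    next
      case False
      then have l2: "i < length ((take l L)[i-1:=r])" using h \<open>\<not> l \<le> i - 1\<close> by simp
      have push: "mset (concat (take l M)) + mset (L!i) = mset (concat ((take l L)[i-1:=r])) + mset (x # (L!i))"
        using mset_concat_update[OF l2, of "x # (L!i)"] h l2 tM by simp
      from pop push have "low_mset l M = low_mset l L" unfolding low_mset_def by (simp add: ac_simps)
      then show ?thesis using False by simp
    qed
  qed
qed

lemma run_low_mset: "runL w L = Some M \<Longrightarrow> low_mset l M \<subseteq># low_mset l L"
proof (induction w arbitrary: L)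
  case (Cons i w)
  then obtain M1 where "stepL i L = Some M1" "runL w M1 = Some M" by (auto split: option.splits)
  then show ?case using Cons.IH step_low_mset by (meson subset_mset.order_trans)
qed simp

text \<open>If u fails on L, then on the padded state u must at some point move a padding
  element out of column i-1; it can never return, so u cannot end in any padded state.\<close>

lemma failing_run_moves_padding:
  assumes V: "validL n L" and P: "length P = n" "\<forall>j<n. P!j \<noteq> []" "distinct (concat L @ concat P)"
    and u: "runL u L = None" and su: "set u \<subseteq> {1..<n}" and Y: "length Y = n"
  shows "runL u (padL P L) \<noteq> Some (padL P Y)"
proof
  assume uS: "runL u (padL P L) = Some (padL P Y)"
  have lenL: "length L = n" using V by (simp add: validL_def)
  obtain w1 i w2 X1 where dec: "u = w1 @ i # w2" "runL w1 L = Some X1" "stepL i X1 = None"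
    using run_first_fail[OF u] by blast
  have i: "1 \<le> i" "i < n" using su dec(1) by auto
  have lenX1: "length X1 = n" using run_length[OF dec(2)] lenL by simp
  have X1_empty: "X1!(i-1) = []" using dec(3) i lenX1 by (auto simp: stepL_def split: list.splits)
  obtain p ps where pp: "P!(i-1) = p # ps" using P(2) i by (metis list.exhaust less_imp_diff_less)
  have r1: "runL w1 (padL P L) = Some (padL P X1)" using run_pad[OF _ dec(2)] P(1) lenL by simp
  have top: "padL P X1 ! (i-1) = p # ps" using X1_empty lenX1 P(1) i pp by simp
  from uS dec(1) r1 obtain Z1 where Z1: "stepL i (padL P X1) = Some Z1" "runL w2 Z1 = Some (padL P Y)"
    by (auto simp: run_append split: option.splits)
  have "validL n (padL P X1)"
    using run_valid_iff[OF r1] pad_valid[OF V P(1) P(3)] by simp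
  then have "count (mset (concat (padL P X1))) p \<le> 1"
    by (simp add: validL_def distinct_count_atmost_1)
  then have "count (low_mset i (padL P X1)) p \<le> 1"
    using mset_subset_eq_count[OF low_mset_sub] order_trans by blast
  then have "p \<notin># low_mset i Z1" using step_low_mset[OF Z1(1), of i] top by (simp add: not_in_iff)
  then have gone: "p \<notin># low_mset i (padL P Y)" using run_low_mset[OF Z1(2), of i] by (auto dest: mset_subset_eqD)
  have "p \<in> set (padL P Y ! (i-1))" using P(1) Y i pp by simp
  moreover have "padL P Y ! (i-1) \<in> set (take i (padL P Y))"
    using i P(1) Y by (auto simp: in_set_conv_nth intro!: exI[of _ "i-1"])
  ultimately show False using gone unfolding low_mset_def by auto
qed

lemma pad_separates:
  assumes V: "validL n L" and P: "length P = n" "\<forall>j<n. P!j \<noteq> []" "distinct (concat L @ concat P)"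
    and ne: "runL u L \<noteq> runL v L" and su: "set u \<subseteq> {1..<n}" and sv: "set v \<subseteq> {1..<n}"
  shows "runL u (padL P L) \<noteq> runL v (padL P L)"
proof -
  have lenL: "length L = n" using V by (simp add: validL_def)
  show ?thesis
  proof (cases "runL u L")
    case None
    then obtain Y where Y: "runL v L = Some Y" using ne by (cases "runL v L") auto
    have "runL v (padL P L) = Some (padL P Y)" using run_pad[OF _ Y] P(1) lenL by simp
    then show ?thesis using failing_run_moves_padding[OF V P None su] run_length[OF Y] lenL by auto
  next
    case (Some X)
    show ?thesis
    proof (cases "runL v L")
      case None
      have "runL u (padL P L) = Some (padL P X)" using run_pad[OF _ \<open>runL u L = Some X\<close>] P(1) lenL by simp
      moreover have "runL v (padL P L) \<noteq> Some (padL P X)"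
        using failing_run_moves_padding[OF V P None sv, of X] run_length[OF \<open>runL u L = Some X\<close>] lenL by simp
      ultimately show ?thesis by simp
    next
      case (Some Y)
      have "X \<noteq> Y" using ne \<open>runL u L = Some X\<close> Some by simp
      then have "padL P X \<noteq> padL P Y"
        using pad_inj[of P X Y] P(1) lenL run_length[OF Some] run_length[OF \<open>runL u L = Some X\<close>] by auto
      then show ?thesis using run_pad[OF _ \<open>runL u L = Some X\<close>] run_pad[OF _ Some] P(1) lenL by simp
    qed
  qed
qed

theorem cancel_columns:
  assumes sa: "set a \<subseteq> {1..<n}" and sb: "set b \<subseteq> {1..<n}"
    and su: "set u \<subseteq> {1..<n}" and sv: "set v \<subseteq> {1..<n}"
    and H: "\<forall>L. validL n L \<longrightarrow> runL (a@u@b) L = runL (a@v@b) L"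
  shows "\<forall>L. validL n L \<longrightarrow> runL u L = runL v L"
proof (rule ccontr)
  assume "\<not> ?thesis"
  then obtain L where V: "validL n L" and ne: "runL u L \<noteq> runL v L" by blast
  have lenL: "length L = n" using V by (simp add: validL_def)
  define d where "d = length a + length u + length v + length b + 1"
  obtain P where P: "length P = n" "\<forall>j<n. length (P!j) = d" "distinct (concat L @ concat P)"
    using fresh_pad[of "concat L" n d] V by (auto simp: validL_def)
  define S where "S = padL P L"
  have VS: "validL n S" unfolding S_def using pad_valid[OF V P(1,3)] .
  have lenS: "length S = n" using VS by (simp add: validL_def)
  have dS: "deep d S" unfolding S_def using pad_deep[of P L d] P(1,2) lenL by simp
  have "\<forall>j<n. P!j \<noteq> []" using P(2) by (auto simp: d_def)
  then have neS: "runL u S \<noteq> runL v S"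
    unfolding S_def using pad_separates[OF V P(1) _ P(3) ne su sv] by blast
  obtain X where X: "runL u S = Some X" and X_deep: "deep (d - length u) X"
    using run_deep[OF dS, of u] su lenS by (auto simp: d_def)
  obtain Y where Y: "runL v S = Some Y" and Y_deep: "deep (d - length v) Y"
    using run_deep[OF dS, of v] sv lenS by (auto simp: d_def)
  have lenXY: "length X = n" "length Y = n" using run_length[OF X] run_length[OF Y] lenS by auto
  have "deep (length b) X" using deep_mono[OF X_deep, of "length b"] by (simp add: d_def)
  then obtain BX where BX: "runL b X = Some BX"
    using run_deep[OF _ order.refl, of _ X] sb lenXY by auto
  have "deep (length b) Y" using deep_mono[OF Y_deep, of "length b"] by (simp add: d_def)
  then obtain BY where BY: "runL b Y = Some BY"
    using run_deep[OF _ order.refl, of _ Y] sb lenXY by auto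
  have "X \<noteq> Y" using neS X Y by simp
  then have BXY: "BX \<noteq> BY" using run_inj[OF BX] BY by blast
  obtain S0 where S0: "runL a S0 = Some S"
    using run_undo[OF dS, of a] sa lenS by (auto simp: d_def)
  have "validL n S0" using run_valid_iff[OF S0] VS by simp
  then have "runL (a@u@b) S0 = runL (a@v@b) S0" using H by blast
  moreover have "runL (a@u@b) S0 = Some BX" "runL (a@v@b) S0 = Some BY"
    using S0 X Y BX BY by (simp_all add: run_append)
  ultimately show False using BXY by simp
qed

section \<open>Transfer to stacks in series\<close>

definition toL :: "nat list \<times> nat list list \<times> nat list \<Rightarrow> nat list list" where
  "toL st = (case st of (inp, ss, out) \<Rightarrow> inp # ss @ [rev out])"

definition fromL :: "nat list list \<Rightarrow> nat list \<times> nat list list \<times> nat list" where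
  "fromL L = (hd L, butlast (tl L), rev (last L))"

lemma from_to[simp]: "fromL (toL st) = st"
  by (cases st) (auto simp: toL_def fromL_def)

lemma to_from: "2 \<le> length L \<Longrightarrow> toL (fromL L) = L"
  by (cases L; cases "tl L" rule: rev_cases) (auto simp: toL_def fromL_def)

lemma len_toL[simp]: "length (toL (inp, ss, out)) = length ss + 2"
  by (simp add: toL_def)

lemma distinct_toL: "distinct (concat (toL (inp, ss, out))) \<longleftrightarrow> distinct (inp @ concat ss @ out)"
  by (auto simp: toL_def)

lemma act_None[simp]: "act k w None = None"
  by (induction w) auto

lemma move_from_input:
  assumes "length ss = k"
  shows "move k 1 (Some (inp, ss, out)) = map_option fromL (stepL 1 (toL (inp, ss, out)))"
proof (cases ss)
  case Nil
  then show ?thesis using assms by (cases inp) (auto simp: stepL_def toL_def fromL_def)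
next
  case (Cons s ss')
  then show ?thesis using assms by (cases inp) (auto simp: stepL_def toL_def fromL_def)
qed

lemma move_between_stacks:
  assumes h: "length ss = k" "Suc (Suc j) \<le> k"
  shows "move k (Suc (Suc j)) (Some (inp, ss, out)) = map_option fromL (stepL (Suc (Suc j)) (toL (inp, ss, out)))"
proof (cases "ss!j")
  case Nil
  then show ?thesis using h by (auto simp: stepL_def toL_def fromL_def nth_append Let_def)
next
  case (Cons x r)
  have "(inp # ss @ [rev out])[Suc j := r, Suc (Suc j) := x # ((inp # ss @ [rev out]) ! Suc (Suc j))]
     = inp # (ss[j := r, Suc j := x # (ss ! Suc j)]) @ [rev out]"
    using h by (simp add: nth_append list_update_append)
  then show ?thesis using Cons h by (auto simp: stepL_def toL_def fromL_def nth_append Let_def)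
qed

lemma move_to_output:
  "length ss = k \<Longrightarrow> 1 \<le> k \<Longrightarrow> move k (k+1) (Some (inp, ss, out)) = map_option fromL (stepL (k+1) (toL (inp, ss, out)))"
  by (cases "ss!(k-1)")
    (auto simp: stepL_def toL_def fromL_def nth_append list_update_append Let_def split: nat.splits)

lemma move_step:
  assumes h: "length ss = k"
  shows "move k i (Some (inp, ss, out)) = map_option fromL (stepL i (toL (inp, ss, out)))"
proof -
  consider "i < 1 \<or> k + 1 < i" | "i = 1" | "2 \<le> i" "i \<le> k" | "i = k+1" "1 \<le> k"
    by linarith
  then show ?thesis
  proof cases
    case 1 then show ?thesis using h by (auto simp: stepL_def toL_def)
  next
    case 2 then show ?thesis using h move_from_input by simp
  next
    case 3 then show ?thesis using h move_between_stacks[of ss k "i-2"] by (cases i; cases "i-1") auto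
  next
    case 4 then show ?thesis using h move_to_output by simp
  qed
qed

lemma act_run:
  "length ss = k \<Longrightarrow> act k w (Some (inp, ss, out)) = map_option fromL (runL w (toL (inp, ss, out)))"
proof (induction w arbitrary: inp ss out)
  case (Cons i w)
  show ?case
  proof (cases "stepL i (toL (inp, ss, out))")
    case None
    then show ?thesis using move_step[OF Cons.prems, of i inp out] by simp
  next
    case (Some M)
    have lM: "length M = k + 2" using step_length[OF Some] Cons.prems by simp
    obtain inp' ss' out' where f: "fromL M = (inp', ss', out')" by (cases "fromL M")
    have tf: "toL (inp', ss', out') = M" using to_from[of M] lM f by simp
    then have "length ss' = k" using lM by (metis len_toL add_right_cancel)
    then show ?thesis using move_step[OF Cons.prems, of i inp out] Some Cons.IH[of ss' inp' out'] f tf by simp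
  qed
qed simp

lemma equiv_words_columns:
  "equiv_words k x y \<longleftrightarrow> (\<forall>L. validL (k+2) L \<longrightarrow> runL x L = runL y L)"
proof
  assume E: "equiv_words k x y"
  show "\<forall>L. validL (k+2) L \<longrightarrow> runL x L = runL y L"
  proof (intro allI impI)
    fix L assume V: "validL (k+2) L"
    obtain inp ss out where f: "fromL L = (inp, ss, out)" by (cases "fromL L")
    have tf: "toL (inp, ss, out) = L" using to_from[of L] V f by (simp add: validL_def)
    have lss: "length ss = k" using V tf[symmetric] by (simp add: validL_def)
    have "distinct (concat (toL (inp, ss, out)))" using V tf by (simp add: validL_def)
    then have "distinct (inp @ concat ss @ out)" by (simp only: distinct_toL)
    then have "Some (inp, ss, out) \<in> states k" using lss by (simp add: states_def)
    then have "act k x (Some (inp, ss, out)) = act k y (Some (inp, ss, out))"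
      using E by (simp add: equiv_words_def)
    then have eq: "map_option fromL (runL x L) = map_option fromL (runL y L)"
      using act_run[OF lss] tf by simp
    show "runL x L = runL y L"
    proof (cases "runL x L")
      case None then show ?thesis using eq by simp
    next
      case (Some X)
      then obtain Y where Y: "runL y L = Some Y" using eq by (cases "runL y L") auto
      have "fromL X = fromL Y" using eq Some Y by simp
      moreover have "length X = k+2" "length Y = k+2"
        using run_length Some Y V by (auto simp: validL_def)
      ultimately have "X = Y" by (metis to_from le_add2)
      then show ?thesis using Some Y by simp
    qed
  qed
next
  assume H: "\<forall>L. validL (k+2) L \<longrightarrow> runL x L = runL y L"
  show "equiv_words k x y" unfolding equiv_words_def
  proof
    fix s assume s: "s \<in> states k"
    show "act k x s = act k y s"
    proof (cases s)
      case (Some st)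
      then obtain inp ss out where st: "s = Some (inp, ss, out)" "length ss = k" "distinct (inp @ concat ss @ out)"
        using s by (auto simp: states_def)
      have "validL (k+2) (toL (inp, ss, out))" using st distinct_toL by (simp add: validL_def)
      then show ?thesis using H act_run[OF st(2)] st(1) by simp
    qed simp
  qed
qed

lemma equiv_columns_congruence:
  assumes H: "\<forall>L. validL n L \<longrightarrow> runL u L = runL v L"
  shows "\<forall>L. validL n L \<longrightarrow> runL (a@u@b) L = runL (a@v@b) L"
proof (intro allI impI)
  fix L assume V: "validL n L"
  show "runL (a@u@b) L = runL (a@v@b) L"
  proof (cases "runL a L")
    case (Some M)
    then have "runL u M = runL v M" using H run_valid_iff[OF Some] V by simp
    then show ?thesis using Some by (simp add: run_append)
  qed (simp add: run_append)
qed

theorem lemma3: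
  fixes k :: nat and a b u v :: "nat list"
  assumes "set a \<subseteq> {1..k+1}" and "set b \<subseteq> {1..k+1}"
      and "set u \<subseteq> {1..k+1}" and "set v \<subseteq> {1..k+1}"
  shows "equiv_words k (a @ u @ b) (a @ v @ b) \<longleftrightarrow> equiv_words k u v"
proof -
  have range: "{1..k+1} = {1..<k+2}" by auto
  show ?thesis
  proof
    assume "equiv_words k (a @ u @ b) (a @ v @ b)"
    then show "equiv_words k u v"
      using cancel_columns[of a "k+2" b u v] assms range unfolding equiv_words_columns by simp
  next
    assume "equiv_words k u v"
    then show "equiv_words k (a @ u @ b) (a @ v @ b)"
      using equiv_columns_congruence[of "k+2" u v a b] unfolding equiv_words_columns by simp
  qed
qed

end
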